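(* Consider the packet spreading algorithm described in the context with any $N\ge 2$. For every iteration $k\in\{0,1,\dots,K-1\}$, letting $i=m_k$ be the source selected in iteration $k$, we have for every source $j\neq i$ $$\tilde Q_j^{k+1}=\frac{x_j^k+1}{K_j}-\frac{x_i^k}{K_i}.$$
   Context: Packet spreading algorithm: Let $N\ge 2$, let $K_1,\dots,K_N$ be positive integers and $K=\sum_{n=1}^N K_n$. The algorithm runs iterations $k=0,1,\dots,K-1$ and maintains deficit counters $B_n^k$, $1\le n\le N$, with $B_n^0=0$ for all $n$. In iteration $k$, define the quantums $Q_n^k=\frac{(1-B_n^k)K}{K_n}$; select a source $m_k\in\arg\min_{1\le n\le N} Q_n^k$ (ties broken arbitrarily); let $Q=Q_{m_k}^k$; set $B_n^{k+1}=B_n^k+Q\frac{K_n}{K}$ for $n\neq m_k$ and $B_{m_k}^{k+1}=0$; and set the $k$-th entry of the output pattern to $P(k)=m_k$. Normalized quantums: $\tilde Q_n^k=Q_n^k/K=(1-B_n^k)/K_n$. For $0\le k\le K-1$, $x_n^k$ denotes the number of indices $k'\in\{0,\dots,k\}$ with $m_{k'}=n$, i.e. the number of source-$n$ instances inserted into the pattern after iteration $k$. *)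

theory Defs
  imports Complex_Main
begin

text \<open>A run is described by its selection sequence m :: nat \<Rightarrow> nat (m k = m_k);
  deficit counters are determined by m.\<close>

definition total_K :: "nat \<Rightarrow> (nat \<Rightarrow> nat) \<Rightarrow> nat" where
  "total_K N Kn = (\<Sum>n=1..N. Kn n)"

fun defB :: "nat \<Rightarrow> (nat \<Rightarrow> nat) \<Rightarrow> (nat \<Rightarrow> nat) \<Rightarrow> nat \<Rightarrow> nat \<Rightarrow> real" where
  "defB N Kn m 0 n = 0"
| "defB N Kn m (Suc k) n =
     (if n = m k then 0
      else defB N Kn m k n
           + ((1 - defB N Kn m k (m k)) * real (total_K N Kn) / real (Kn (m k)))
             * real (Kn n) / real (total_K N Kn))"

definition quantum :: "nat \<Rightarrow> (nat \<Rightarrow> nat) \<Rightarrow> (nat \<Rightarrow> nat) \<Rightarrow> nat \<Rightarrow> nat \<Rightarrow> real" where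
  "quantum N Kn m k n = (1 - defB N Kn m k n) * real (total_K N Kn) / real (Kn n)"

definition nquantum :: "nat \<Rightarrow> (nat \<Rightarrow> nat) \<Rightarrow> (nat \<Rightarrow> nat) \<Rightarrow> nat \<Rightarrow> nat \<Rightarrow> real" where
  "nquantum N Kn m k n = quantum N Kn m k n / real (total_K N Kn)"

definition valid_run :: "nat \<Rightarrow> (nat \<Rightarrow> nat) \<Rightarrow> (nat \<Rightarrow> nat) \<Rightarrow> bool" where
  "valid_run N Kn m \<longleftrightarrow>
     (\<forall>k < total_K N Kn. m k \<in> {1..N} \<and>
        (\<forall>n \<in> {1..N}. quantum N Kn m k (m k) \<le> quantum N Kn m k n))"

definition count_x :: "(nat \<Rightarrow> nat) \<Rightarrow> nat \<Rightarrow> nat \<Rightarrow> nat" where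
  "count_x m n k = card {k' \<in> {0..k}. m k' = n}"

end

theory Submission
  imports Defs
begin

text \<open>With i = m k, the normalized quantums evolve by Q(k+1, n) = Q(k, n) - Q(k, i) for n \<noteq> i
  and Q(k+1, i) = 1 / K i: every quantum is shifted by the same amount and the selected one is
  reset. By induction on k, Q(k+1, n) = (x n k + 1) / K n - x i k / K i for every source n, the
  reset of source i being exactly the extra instance counted in x i k.\<close>

lemma nquantum_eq:
  assumes "total_K N Kn > 0"
  shows "nquantum N Kn m k n = (1 - defB N Kn m k n) / real (Kn n)"
  using assms unfolding nquantum_def quantum_def by (cases "Kn n = 0") (simp_all add: field_simps)

lemma nquantum_0:
  assumes "total_K N Kn > 0"
  shows "nquantum N Kn m 0 n = 1 / real (Kn n)"
  using assms by (simp add: nquantum_eq)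

lemma nquantum_Suc:
  assumes "total_K N Kn > 0" and "Kn n > 0" and "Kn (m k) > 0"
  shows "nquantum N Kn m (Suc k) n =
    (if n = m k then 1 / real (Kn n) else nquantum N Kn m k n - nquantum N Kn m k (m k))"
  using assms by (simp add: nquantum_eq field_simps)

lemma count_x_0: "count_x m n 0 = (if m 0 = n then 1 else 0)"
  unfolding count_x_def by (simp add: Collect_conv_if)

lemma count_x_Suc: "count_x m n (Suc k) = count_x m n k + (if m (Suc k) = n then 1 else 0)"
proof -
  have "{k' \<in> {0..Suc k}. m k' = n} =
      (if m (Suc k) = n then insert (Suc k) {k' \<in> {0..k}. m k' = n} else {k' \<in> {0..k}. m k' = n})"
    by (auto simp: le_Suc_eq)
  then show ?thesis unfolding count_x_def by auto
qed

lemma nquantum_Suc_count_x: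
  assumes K: "total_K N Kn > 0"
    and selected_pos: "\<And>k'. k' \<le> k \<Longrightarrow> Kn (m k') > 0"
    and "Kn n > 0"
  shows "nquantum N Kn m (Suc k) n
           = real (count_x m n k + 1) / real (Kn n) - real (count_x m (m k) k) / real (Kn (m k))"
  using selected_pos \<open>Kn n > 0\<close>
proof (induction k arbitrary: n)
  case 0
  then show ?case
    using nquantum_Suc[OF K, of n m 0] by (simp add: nquantum_0[OF K] count_x_0)
next
  case (Suc k)
  have pos_k: "Kn (m (Suc k)) > 0" using Suc.prems(1) by blast
  show ?case
  proof (cases "n = m (Suc k)")
    case True
    then show ?thesis
      using nquantum_Suc[OF K, of n m "Suc k"] \<open>Kn n > 0\<close> pos_k by (simp add: field_simps)
  next
    case False
    have IH: "nquantum N Kn m (Suc k) n'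
        = real (count_x m n' k + 1) / real (Kn n') - real (count_x m (m k) k) / real (Kn (m k))"
      if "Kn n' > 0" for n'
      using Suc.IH[OF _ that] Suc.prems(1) by simp
    show ?thesis
      using nquantum_Suc[OF K, of n m "Suc k"] \<open>Kn n > 0\<close> pos_k False IH[OF \<open>Kn n > 0\<close>] IH[OF pos_k]
      by (simp add: count_x_Suc field_simps)
  qed
qed

theorem mainTheorem4:
  fixes N :: nat and Kn :: "nat \<Rightarrow> nat" and m :: "nat \<Rightarrow> nat"
  assumes "N \<ge> 2"
    and "\<forall>n \<in> {1..N}. Kn n > 0"
    and "valid_run N Kn m"
    and "k < total_K N Kn"
    and "j \<in> {1..N}" and "j \<noteq> m k"
  shows "nquantum N Kn m (Suc k) j
           = real (count_x m j k + 1) / real (Kn j) - real (count_x m (m k) k) / real (Kn (m k))"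
proof (rule nquantum_Suc_count_x)
  show "total_K N Kn > 0" using assms(4) by simp
  show "Kn (m k') > 0" if "k' \<le> k" for k'
    using assms(2-4) that unfolding valid_run_def by auto
  show "Kn j > 0" using assms(2,5) by blast
qed

end
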